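(* Let $G$ be a group, $N$ a normal subgroup, $m\in\mathbb{N}$, and $x_1,\dots,x_m\in N$ with $x_1\cdots x_m\in[G,N]$. Set $a_n=\mathrm{cl}_{G,N}(x_1^n+\cdots+x_m^n)+(m-1)$ for $n\in\mathbb{N}$. Then $(a_n)_n$ is subadditive; consequently the limit $\lim_{n\to\infty}\frac1n\mathrm{cl}_{G,N}(x_1^n+\cdots+x_m^n)$ exists.
   Context: $[G,N]$ is generated by $[g,x]=gxg^{-1}x^{-1}$ ($g\in G,x\in N$); $\mathrm{cl}_{G,N}$ is the word length on $[G,N]$ with respect to these generators. For $y_1,\dots,y_m\in N$ with $y_1\cdots y_m\in[G,N]$, $\mathrm{cl}_{G,N}(y_1+\cdots+y_m)=\inf_{g_1,\dots,g_{m-1}\in G}\mathrm{cl}_{G,N}(y_1g_1y_2g_1^{-1}\cdots g_{m-1}y_mg_{m-1}^{-1})$. *)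

theory Defs
  imports "HOL-Algebra.Algebra" "HOL-Analysis.Analysis"
begin

definition comm :: "('a, 'b) monoid_scheme \<Rightarrow> 'a \<Rightarrow> 'a \<Rightarrow> 'a" where
  "comm G g x = g \<otimes>\<^bsub>G\<^esub> x \<otimes>\<^bsub>G\<^esub> inv\<^bsub>G\<^esub> g \<otimes>\<^bsub>G\<^esub> inv\<^bsub>G\<^esub> x"

definition comm_gens :: "('a, 'b) monoid_scheme \<Rightarrow> 'a set \<Rightarrow> 'a set" where
  "comm_gens G N = {comm G g x | g x. g \<in> carrier G \<and> x \<in> N}"

definition mixed_comm :: "('a, 'b) monoid_scheme \<Rightarrow> 'a set \<Rightarrow> 'a set" where
  "mixed_comm G N = generate G (comm_gens G N)"

definition cl :: "('a, 'b) monoid_scheme \<Rightarrow> 'a set \<Rightarrow> 'a \<Rightarrow> nat" where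
  "cl G N y = Inf {k. \<exists>cs. length cs = k
      \<and> set cs \<subseteq> comm_gens G N \<union> (\<lambda>c. inv\<^bsub>G\<^esub> c) ` comm_gens G N
      \<and> y = foldr (\<lambda>c acc. c \<otimes>\<^bsub>G\<^esub> acc) cs \<one>\<^bsub>G\<^esub>}"

definition ordprod :: "('a, 'b) monoid_scheme \<Rightarrow> nat \<Rightarrow> (nat \<Rightarrow> 'a) \<Rightarrow> 'a" where
  "ordprod G m y = foldr (\<lambda>i acc. y i \<otimes>\<^bsub>G\<^esub> acc) [1..<Suc m] \<one>\<^bsub>G\<^esub>"

text \<open>y_1 g_1 y_2 g_1^-1 ... g_{m-1} y_m g_{m-1}^-1, where h i plays the role of g_{i-1}
  (i = 2..m).\<close>
definition conjprod :: "('a, 'b) monoid_scheme \<Rightarrow> nat \<Rightarrow> (nat \<Rightarrow> 'a) \<Rightarrow> (nat \<Rightarrow> 'a) \<Rightarrow> 'a" where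
  "conjprod G m y h = y 1 \<otimes>\<^bsub>G\<^esub>
     foldr (\<lambda>i acc. h i \<otimes>\<^bsub>G\<^esub> y i \<otimes>\<^bsub>G\<^esub> inv\<^bsub>G\<^esub> (h i) \<otimes>\<^bsub>G\<^esub> acc) [2..<Suc m] \<one>\<^bsub>G\<^esub>"

definition cl_sum :: "('a, 'b) monoid_scheme \<Rightarrow> 'a set \<Rightarrow> nat \<Rightarrow> (nat \<Rightarrow> 'a) \<Rightarrow> nat" where
  "cl_sum G N m y = Inf {cl G N (conjprod G m y h) | h. \<forall>i\<in>{2..m}. h i \<in> carrier G}"

end

theory Submission
  imports Defs
begin

text \<open>
  Write \<open>P\<^sub>n(h)\<close> for \<open>x\<^sub>1\<^sup>n (h\<^sub>2 x\<^sub>2\<^sup>n h\<^sub>2\<^sup>-\<^sup>1) \<cdots> (h\<^sub>m x\<^sub>m\<^sup>n h\<^sub>m\<^sup>-\<^sup>1)\<close>.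
  For \<open>y \<in> N\<close> we have \<open>g y g\<^sup>-\<^sup>1 = [g f\<^sup>-\<^sup>1, f y f\<^sup>-\<^sup>1] (f y f\<^sup>-\<^sup>1)\<close>, so changing
  one conjugator costs one generator of \<open>[G,N]\<close>. Moving the factors of \<open>P\<^sub>k(f)\<close> to the
  left through \<open>P\<^sub>n(h)\<close> only conjugates the latter, hence \<open>P\<^sub>n(h) P\<^sub>k(f) = w P\<^sub>n\<^sub>+\<^sub>k(f)\<close>
  with \<open>cl(w) \<le> m - 1\<close>. Since \<open>cl\<close> is subadditive and conjugation invariant on \<open>[G,N]\<close>,
  this yields \<open>cl(P\<^sub>n\<^sub>+\<^sub>k(f)) \<le> cl(P\<^sub>n(h)) + cl(P\<^sub>k(f)) + m - 1\<close>, and Fekete's lemma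
  gives the limit.
\<close>

definition comm_letters :: "('a, 'b) monoid_scheme \<Rightarrow> 'a set \<Rightarrow> 'a set" where
  "comm_letters G N = comm_gens G N \<union> (\<lambda>c. inv\<^bsub>G\<^esub> c) ` comm_gens G N"

definition cl_near :: "('a, 'b) monoid_scheme \<Rightarrow> 'a set \<Rightarrow> nat \<Rightarrow> 'a \<Rightarrow> 'a \<Rightarrow> bool" where
  "cl_near G N k y z \<longleftrightarrow>
    z \<in> carrier G \<and> (\<exists>w \<in> mixed_comm G N. cl G N w \<le> k \<and> y = w \<otimes>\<^bsub>G\<^esub> z)"

definition conj_prod :: "('a, 'b) monoid_scheme \<Rightarrow> (nat \<Rightarrow> 'a) \<Rightarrow> (nat \<Rightarrow> 'a) \<Rightarrow> nat list \<Rightarrow> 'a" where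
  "conj_prod G y h l = foldr (\<lambda>i acc. h i \<otimes>\<^bsub>G\<^esub> y i \<otimes>\<^bsub>G\<^esub> inv\<^bsub>G\<^esub> (h i) \<otimes>\<^bsub>G\<^esub> acc) l \<one>\<^bsub>G\<^esub>"

lemma conjprod_eq_conj_prod: "conjprod G m y h = y 1 \<otimes>\<^bsub>G\<^esub> conj_prod G y h [2..<Suc m]"
  by (simp add: conjprod_def conj_prod_def)

context group
begin

lemma mult_inv_cancel_left [simp]: "a \<in> carrier G \<Longrightarrow> b \<in> carrier G \<Longrightarrow> a \<otimes> (inv a \<otimes> b) = b"
  by (simp add: m_assoc [symmetric])

lemma inv_mult_cancel_left [simp]: "a \<in> carrier G \<Longrightarrow> b \<in> carrier G \<Longrightarrow> inv a \<otimes> (a \<otimes> b) = b"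
  by (simp add: m_assoc [symmetric])

lemma comm_closed [simp]: "g \<in> carrier G \<Longrightarrow> x \<in> carrier G \<Longrightarrow> comm G g x \<in> carrier G"
  by (simp add: comm_def)

lemma comm_gens_subset_carrier: "N \<subseteq> carrier G \<Longrightarrow> comm_gens G N \<subseteq> carrier G"
  by (auto simp: comm_gens_def)

lemma comm_letters_subset_carrier: "N \<subseteq> carrier G \<Longrightarrow> comm_letters G N \<subseteq> carrier G"
  using comm_gens_subset_carrier by (auto simp: comm_letters_def)

lemma inv_in_comm_letters:
  assumes "N \<subseteq> carrier G" and "c \<in> comm_letters G N"
  shows "inv c \<in> comm_letters G N"
  using assms(2) comm_gens_subset_carrier[OF assms(1)]
  unfolding comm_letters_def by (auto simp: image_iff)

lemma foldr_mult_closed: "set cs \<subseteq> carrier G \<Longrightarrow> foldr (\<otimes>) cs \<one> \<in> carrier G"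
  by (induct cs) auto

lemma foldr_mult_eq:
  assumes "set cs \<subseteq> carrier G" and "b \<in> carrier G"
  shows "foldr (\<otimes>) cs b = foldr (\<otimes>) cs \<one> \<otimes> b"
  using assms(1)
proof (induct cs)
  case (Cons c cs)
  then have "foldr (\<otimes>) (c # cs) b = c \<otimes> (foldr (\<otimes>) cs \<one> \<otimes> b)" by simp
  then show ?case using Cons.prems assms(2) by (simp add: m_assoc foldr_mult_closed)
qed (use assms(2) in simp)

lemma inv_foldr_mult:
  "set cs \<subseteq> carrier G \<Longrightarrow> inv (foldr (\<otimes>) cs \<one>) = foldr (\<otimes>) (rev (map (\<lambda>c. inv c) cs)) \<one>"
proof (induct cs)
  case (Cons c cs)
  then have "set (rev (map (\<lambda>c. inv c) cs)) \<subseteq> carrier G" by auto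
  then show ?case using Cons foldr_mult_eq[of "rev (map (\<lambda>c. inv c) cs)" "inv c"]
    by (auto simp: inv_mult_group foldr_mult_closed)
qed simp

lemma conj_foldr_mult:
  "set cs \<subseteq> carrier G \<Longrightarrow> g \<in> carrier G \<Longrightarrow>
    g \<otimes> foldr (\<otimes>) cs \<one> \<otimes> inv g = foldr (\<otimes>) (map (\<lambda>c. g \<otimes> c \<otimes> inv g) cs) \<one>"
proof (induct cs)
  case (Cons c cs)
  have "g \<otimes> foldr (\<otimes>) (c # cs) \<one> \<otimes> inv g
      = (g \<otimes> c \<otimes> inv g) \<otimes> (g \<otimes> foldr (\<otimes>) cs \<one> \<otimes> inv g)"
    using Cons.prems by (simp add: m_assoc foldr_mult_closed)
  then show ?case using Cons by simp
qed simp

lemma mixed_comm_eq_words: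
  assumes "N \<subseteq> carrier G"
  shows "mixed_comm G N = {foldr (\<otimes>) cs \<one> | cs. set cs \<subseteq> comm_letters G N}"
proof (intro equalityI subsetI)
  fix y assume "y \<in> mixed_comm G N"
  then show "y \<in> {foldr (\<otimes>) cs \<one> | cs. set cs \<subseteq> comm_letters G N}"
    unfolding mixed_comm_def
  proof (induct rule: generate.induct)
    case one show ?case by (auto intro: exI[of _ "[]"])
  next
    case (incl c)
    then show ?case using comm_gens_subset_carrier[OF assms]
      by (intro CollectI exI[of _ "[c]"]) (auto simp: comm_letters_def)
  next
    case (inv c)
    then show ?case using comm_gens_subset_carrier[OF assms]
      by (intro CollectI exI[of _ "[inv c]"]) (auto simp: comm_letters_def)
  next
    case (eng y z)
    then obtain cs ds where "set cs \<subseteq> comm_letters G N" "y = foldr (\<otimes>) cs \<one>"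
      and "set ds \<subseteq> comm_letters G N" "z = foldr (\<otimes>) ds \<one>" by blast
    moreover have "set cs \<subseteq> carrier G" "set ds \<subseteq> carrier G"
      using calculation comm_letters_subset_carrier[OF assms] by auto
    ultimately show ?case using foldr_mult_eq[of cs z]
      by (intro CollectI exI[of _ "cs @ ds"]) (auto simp: foldr_mult_closed)
  qed
next
  fix y assume "y \<in> {foldr (\<otimes>) cs \<one> | cs. set cs \<subseteq> comm_letters G N}"
  then obtain cs where "set cs \<subseteq> comm_letters G N" "y = foldr (\<otimes>) cs \<one>" by blast
  then show "y \<in> mixed_comm G N"
    unfolding mixed_comm_def
  proof (induct cs arbitrary: y)
    case Nil then show ?case by (simp add: generate.one)
  next
    case (Cons c cs)
    have "c \<in> generate G (comm_gens G N)"
      using Cons.prems(1) by (auto simp: comm_letters_def intro: generate.incl generate.inv)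
    then show ?case using Cons by (auto intro: generate.eng)
  qed
qed

lemma cl_le_length:
  "set cs \<subseteq> comm_letters G N \<Longrightarrow> cl G N (foldr (\<otimes>) cs \<one>) \<le> length cs"
  unfolding cl_def Inf_nat_def by (rule Least_le) (auto simp: comm_letters_def)

lemma cl_obtain_word:
  assumes "N \<subseteq> carrier G" and "y \<in> mixed_comm G N"
  obtains cs where "set cs \<subseteq> comm_letters G N" "length cs = cl G N y" "y = foldr (\<otimes>) cs \<one>"
proof -
  obtain cs where "set cs \<subseteq> comm_letters G N" "y = foldr (\<otimes>) cs \<one>"
    using assms(2) unfolding mixed_comm_eq_words[OF assms(1)] by blast
  then have "cl G N y \<in> {k. \<exists>cs. length cs = k \<and> set cs \<subseteq> comm_letters G N \<and> y = foldr (\<otimes>) cs \<one>}"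
    unfolding cl_def comm_letters_def by (intro Inf_nat_def1) blast
  then show thesis using that by blast
qed

lemma cl_one: "cl G N \<one> = 0"
  using cl_le_length[of "[]"] by simp

lemma cl_comm_le_1:
  assumes "N \<subseteq> carrier G" and "g \<in> carrier G" and "x \<in> N"
  shows "cl G N (comm G g x) \<le> 1"
proof -
  have "comm G g x \<in> comm_letters G N"
    using assms by (auto simp: comm_letters_def comm_gens_def)
  then show ?thesis using cl_le_length[of "[comm G g x]" N] assms by auto
qed

lemma cl_mult_le:
  assumes "N \<subseteq> carrier G" and "y \<in> mixed_comm G N" and "z \<in> mixed_comm G N"
  shows "cl G N (y \<otimes> z) \<le> cl G N y + cl G N z"
proof -
  obtain cs ds where cs: "set cs \<subseteq> comm_letters G N" "length cs = cl G N y" "y = foldr (\<otimes>) cs \<one>"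
    and ds: "set ds \<subseteq> comm_letters G N" "length ds = cl G N z" "z = foldr (\<otimes>) ds \<one>"
    using cl_obtain_word assms by metis
  moreover have "set cs \<subseteq> carrier G" "set ds \<subseteq> carrier G"
    using cs ds comm_letters_subset_carrier[OF assms(1)] by auto
  ultimately have "y \<otimes> z = foldr (\<otimes>) (cs @ ds) \<one>"
    using foldr_mult_eq[of cs z] by (simp add: foldr_mult_closed)
  then show ?thesis using cl_le_length[of "cs @ ds" N] cs ds by simp
qed

lemma cl_inv_le:
  assumes "N \<subseteq> carrier G" and "y \<in> mixed_comm G N"
  shows "cl G N (inv y) \<le> cl G N y"
proof -
  obtain cs where cs: "set cs \<subseteq> comm_letters G N" "length cs = cl G N y" "y = foldr (\<otimes>) cs \<one>"
    using cl_obtain_word assms by metis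
  then have "inv y = foldr (\<otimes>) (rev (map (\<lambda>c. inv c) cs)) \<one>"
    using comm_letters_subset_carrier[OF assms(1)] by (auto simp: inv_foldr_mult)
  then show ?thesis
    using cl_le_length[of "rev (map (\<lambda>c. inv c) cs)" N] cs inv_in_comm_letters[OF assms(1)] by auto
qed

lemma conj_prod_Nil [simp]: "conj_prod G y h [] = \<one>"
  by (simp add: conj_prod_def)

lemma conj_prod_Cons [simp]:
  "conj_prod G y h (i # l) = h i \<otimes> y i \<otimes> inv (h i) \<otimes> conj_prod G y h l"
  by (simp add: conj_prod_def)

lemma conj_prod_closed:
  "\<forall>i\<in>set l. y i \<in> carrier G \<and> h i \<in> carrier G \<Longrightarrow> conj_prod G y h l \<in> carrier G"
  by (induct l) auto

lemma conj_prod_cong: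
  "l = l' \<Longrightarrow> (\<And>i. i \<in> set l' \<Longrightarrow> y i = y' i) \<Longrightarrow> conj_prod G y h l = conj_prod G y' h l'"
  by (induct l arbitrary: l') auto

lemma conj_prod_conj:
  assumes "\<forall>i\<in>set l. y i \<in> carrier G \<and> h i \<in> carrier G" and "g \<in> carrier G"
  shows "g \<otimes> conj_prod G y h l \<otimes> inv g = conj_prod G y (\<lambda>i. g \<otimes> h i) l"
  using assms(1)
proof (induct l)
  case (Cons i l)
  have "g \<otimes> conj_prod G y h (i # l) \<otimes> inv g
      = (g \<otimes> h i) \<otimes> y i \<otimes> inv (g \<otimes> h i) \<otimes> (g \<otimes> conj_prod G y h l \<otimes> inv g)"
    using Cons.prems assms(2) by (simp add: m_assoc inv_mult_group conj_prod_closed)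
  then show ?case using Cons by simp
qed (use assms(2) in simp)

lemma conj_prod_one:
  "\<forall>i\<in>set l. h i \<in> carrier G \<Longrightarrow> conj_prod G (\<lambda>_. \<one>) h l = \<one>"
  by (induct l) auto

lemma conj_prod_trivial_conjugators:
  "\<forall>i\<in>set l. y i \<in> carrier G \<Longrightarrow> conj_prod G y (\<lambda>_. \<one>) l = foldr (\<lambda>i acc. y i \<otimes> acc) l \<one>"
  by (induct l) auto

lemma conjprod_cong:
  assumes "1 \<le> m" and "\<And>i. i \<in> {1..m} \<Longrightarrow> y i = y' i"
  shows "conjprod G m y h = conjprod G m y' h"
proof -
  have "conj_prod G y h [2..<Suc m] = conj_prod G y' h [2..<Suc m]"
    by (rule conj_prod_cong) (use assms(2) in auto)
  then show ?thesis using assms by (simp add: conjprod_eq_conj_prod)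
qed

lemma conjprod_closed:
  "1 \<le> m \<Longrightarrow> \<forall>i\<in>{1..m}. y i \<in> carrier G \<Longrightarrow> \<forall>i\<in>{2..m}. h i \<in> carrier G \<Longrightarrow>
    conjprod G m y h \<in> carrier G"
  unfolding conjprod_eq_conj_prod by (intro m_closed conj_prod_closed) auto

lemma conjprod_one:
  "\<forall>i\<in>{2..m}. h i \<in> carrier G \<Longrightarrow> conjprod G m (\<lambda>_. \<one>) h = \<one>"
  by (simp add: conjprod_eq_conj_prod conj_prod_one)

lemma conjprod_trivial_conjugators:
  assumes "1 \<le> m" and "\<forall>i\<in>{1..m}. y i \<in> carrier G"
  shows "conjprod G m y (\<lambda>_. \<one>) = ordprod G m y"
proof -
  have "[1..<Suc m] = 1 # [2..<Suc m]"
    using assms(1) by (simp add: upt_conv_Cons numeral_2_eq_2 del: upt_Suc)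
  then show ?thesis
    using assms by (simp add: conjprod_eq_conj_prod ordprod_def conj_prod_trivial_conjugators)
qed

lemma cl_sum_le:
  "\<forall>i\<in>{2..m}. h i \<in> carrier G \<Longrightarrow> cl_sum G N m y \<le> cl G N (conjprod G m y h)"
  unfolding cl_sum_def Inf_nat_def by (rule Least_le) blast

lemma cl_sum_obtain:
  obtains h where "\<forall>i\<in>{2..m}. h i \<in> carrier G" "cl_sum G N m y = cl G N (conjprod G m y h)"
proof -
  have "cl_sum G N m y \<in> {cl G N (conjprod G m y h) | h. \<forall>i\<in>{2..m}. h i \<in> carrier G}"
    unfolding cl_sum_def by (rule Inf_nat_def1) (use one_closed in blast)
  then show thesis using that by blast
qed

end

context normal
begin

lemma comm_conj:
  "g \<in> carrier G \<Longrightarrow> a \<in> carrier G \<Longrightarrow> x \<in> carrier G \<Longrightarrow>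
    g \<otimes> comm G a x \<otimes> inv g = comm G (g \<otimes> a \<otimes> inv g) (g \<otimes> x \<otimes> inv g)"
  by (simp add: comm_def inv_mult_group m_assoc)

lemma comm_gens_conj:
  assumes "c \<in> comm_gens G H" and "g \<in> carrier G"
  shows "g \<otimes> c \<otimes> inv g \<in> comm_gens G H"
proof -
  obtain a x where "a \<in> carrier G" "x \<in> H" "c = comm G a x"
    using assms(1) by (auto simp: comm_gens_def)
  then show ?thesis
    using assms(2) comm_conj[of g a x] inv_op_closed2[of g x] by (auto simp: comm_gens_def)
qed

lemma mixed_comm_normal: "mixed_comm G H \<lhd> G"
  unfolding mixed_comm_def
  by (rule normal_generateI) (auto simp: comm_gens_subset_carrier subset comm_gens_conj)

lemma comm_letters_conj:
  assumes "c \<in> comm_letters G H" and "g \<in> carrier G"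
  shows "g \<otimes> c \<otimes> inv g \<in> comm_letters G H"
  using assms(1) unfolding comm_letters_def
proof
  assume "c \<in> (\<lambda>c. inv c) ` comm_gens G H"
  then obtain d where d: "d \<in> comm_gens G H" "c = inv d" by blast
  then have "g \<otimes> c \<otimes> inv g = inv (g \<otimes> d \<otimes> inv g)"
    using assms(2) comm_gens_subset_carrier[OF subset] by (auto simp: inv_mult_group m_assoc)
  then show "g \<otimes> c \<otimes> inv g \<in> comm_gens G H \<union> (\<lambda>c. inv c) ` comm_gens G H"
    using comm_gens_conj[OF d(1) assms(2)] by blast
qed (use comm_gens_conj assms(2) in blast)

lemma cl_conj_le:
  assumes "y \<in> mixed_comm G H" and "g \<in> carrier G"
  shows "cl G H (g \<otimes> y \<otimes> inv g) \<le> cl G H y"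
proof -
  obtain cs where cs: "set cs \<subseteq> comm_letters G H" "length cs = cl G H y" "y = foldr (\<otimes>) cs \<one>"
    using cl_obtain_word[OF subset assms(1)] by metis
  then have "g \<otimes> y \<otimes> inv g = foldr (\<otimes>) (map (\<lambda>c. g \<otimes> c \<otimes> inv g) cs) \<one>"
    using assms(2) comm_letters_subset_carrier[OF subset] by (auto simp: conj_foldr_mult)
  then show ?thesis
    using cl_le_length[of "map (\<lambda>c. g \<otimes> c \<otimes> inv g) cs" H] cs comm_letters_conj assms(2)
    by auto
qed

lemma mixed_comm_subgroup: "subgroup (mixed_comm G H) G"
  using mixed_comm_normal by (rule normal_imp_subgroup)

lemma cl_near_refl: "z \<in> carrier G \<Longrightarrow> cl_near G H 0 z z"
  unfolding cl_near_def using subgroup.one_closed[OF mixed_comm_subgroup] cl_one by force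

lemma cl_near_mult:
  assumes "cl_near G H k y z" and "cl_near G H j y' z'"
  shows "cl_near G H (k + j) (y \<otimes> y') (z \<otimes> z')"
proof -
  obtain w w' where z: "z \<in> carrier G" "z' \<in> carrier G"
    and w: "w \<in> mixed_comm G H" "cl G H w \<le> k" "y = w \<otimes> z"
    and w': "w' \<in> mixed_comm G H" "cl G H w' \<le> j" "y' = w' \<otimes> z'"
    using assms unfolding cl_near_def by blast
  have wc: "w \<in> carrier G" "w' \<in> carrier G"
    using w(1) w'(1) subgroup.mem_carrier[OF mixed_comm_subgroup] by auto
  define v where "v = z \<otimes> w' \<otimes> inv z"
  have v: "v \<in> mixed_comm G H" "cl G H v \<le> j"
    using normal.inv_op_closed2[OF mixed_comm_normal z(1) w'(1)] cl_conj_le[OF w'(1) z(1)] w'(2)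
    by (auto simp: v_def)
  have "y \<otimes> y' = (w \<otimes> v) \<otimes> (z \<otimes> z')"
    using w(3) w'(3) z wc by (simp add: v_def m_assoc)
  moreover have "cl G H (w \<otimes> v) \<le> k + j"
    using cl_mult_le[OF subset w(1) v(1)] w(2) v(2) by simp
  moreover have "w \<otimes> v \<in> mixed_comm G H"
    using subgroup.m_closed[OF mixed_comm_subgroup w(1) v(1)] .
  ultimately show ?thesis using z unfolding cl_near_def by blast
qed

lemma cl_near_change_conjugator:
  assumes "y \<in> H" and "g \<in> carrier G" and "f \<in> carrier G"
  shows "cl_near G H 1 (g \<otimes> y \<otimes> inv g) (f \<otimes> y \<otimes> inv f)"
proof -
  define v where "v = f \<otimes> y \<otimes> inv f"
  have v: "v \<in> H" using inv_op_closed2[OF assms(3,1)] by (simp add: v_def)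
  have yc: "y \<in> carrier G" using assms(1) subset by blast
  have "g \<otimes> y \<otimes> inv g = comm G (g \<otimes> inv f) v \<otimes> v"
    using assms(2,3) yc by (simp add: comm_def v_def inv_mult_group m_assoc)
  moreover have "comm G (g \<otimes> inv f) v \<in> mixed_comm G H"
    using assms(2,3) v unfolding mixed_comm_def comm_gens_def by (blast intro: generate.incl)
  moreover have "cl G H (comm G (g \<otimes> inv f) v) \<le> 1"
    using cl_comm_le_1[OF subset _ v] assms(2,3) by simp
  ultimately show ?thesis
    using assms(3) yc unfolding cl_near_def v_def by auto
qed

lemma cl_near_mixed_comm_iff:
  "cl_near G H k y z \<Longrightarrow> y \<in> mixed_comm G H \<longleftrightarrow> z \<in> mixed_comm G H"
  unfolding cl_near_def
  by (metis mixed_comm_subgroup subgroup.m_closed subgroup.mem_carrier subgroup.m_inv_closed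
      inv_mult_cancel_left)

lemma cl_le_cl_near:
  assumes "cl_near G H k y z" and "y \<in> mixed_comm G H"
  shows "cl G H z \<le> k + cl G H y"
proof -
  obtain w where z: "z \<in> carrier G" and w: "w \<in> mixed_comm G H" "cl G H w \<le> k" "y = w \<otimes> z"
    using assms(1) unfolding cl_near_def by blast
  have "w \<in> carrier G" using w(1) subgroup.mem_carrier[OF mixed_comm_subgroup] by auto
  then have "z = inv w \<otimes> y" using w(3) z by simp
  moreover have "inv w \<in> mixed_comm G H"
    using subgroup.m_inv_closed[OF mixed_comm_subgroup w(1)] .
  ultimately have "cl G H z \<le> cl G H (inv w) + cl G H y"
    using cl_mult_le[OF subset _ assms(2)] by simp
  then show ?thesis using cl_inv_le[OF subset w(1)] w(2) by simp
qed

lemma subgroup_nat_pow_closed: "x \<in> H \<Longrightarrow> x [^] (n::nat) \<in> H"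
  by (induct n) auto

text \<open>
  Pulling \<open>B = f\<^sub>i z\<^sub>i f\<^sub>i\<^sup>-\<^sup>1\<close> to the left past the tail of the first product conjugates
  that tail, i.e. changes its conjugators; this is why the induction is over arbitrary \<open>g\<close>.
\<close>
lemma conj_prod_mult_cl_near:
  assumes "\<forall>i\<in>set l. y i \<in> H \<and> z i \<in> carrier G \<and> g i \<in> carrier G \<and> f i \<in> carrier G"
  shows "cl_near G H (length l) (conj_prod G y g l \<otimes> conj_prod G z f l)
           (conj_prod G (\<lambda>i. y i \<otimes> z i) f l)"
  using assms
proof (induct l arbitrary: g)
  case Nil
  then show ?case using cl_near_refl[of \<one>] by simp
next
  case (Cons i l)
  then have c: "y i \<in> H" "y i \<in> carrier G" "z i \<in> carrier G" "g i \<in> carrier G" "f i \<in> carrier G"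
    and tail: "\<forall>i\<in>set l. y i \<in> H \<and> z i \<in> carrier G \<and> g i \<in> carrier G \<and> f i \<in> carrier G"
    using subset by auto
  have tail_c: "\<forall>i\<in>set l. y i \<in> carrier G \<and> g i \<in> carrier G"
    using tail subset by blast
  define B where "B = f i \<otimes> z i \<otimes> inv (f i)"
  have B: "B \<in> carrier G" using c by (simp add: B_def)
  have shift: "inv B \<otimes> conj_prod G y g l \<otimes> B = conj_prod G y (\<lambda>j. inv B \<otimes> g j) l"
    using conj_prod_conj[OF tail_c, of "inv B"] B by simp
  have head: "cl_near G H 1 (g i \<otimes> y i \<otimes> inv (g i) \<otimes> B) (f i \<otimes> (y i \<otimes> z i) \<otimes> inv (f i))"
    using cl_near_mult[OF cl_near_change_conjugator[OF c(1) c(4) c(5)] cl_near_refl[OF B]] c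
    by (simp add: B_def m_assoc)
  have "\<forall>j\<in>set l. y j \<in> H \<and> z j \<in> carrier G \<and> inv B \<otimes> g j \<in> carrier G \<and> f j \<in> carrier G"
    using tail B by auto
  from cl_near_mult[OF head Cons.hyps[OF this]]
  have "cl_near G H (length (i # l))
      ((g i \<otimes> y i \<otimes> inv (g i) \<otimes> B) \<otimes> (inv B \<otimes> conj_prod G y g l \<otimes> B \<otimes> conj_prod G z f l))
      (conj_prod G (\<lambda>i. y i \<otimes> z i) f (i # l))"
    by (simp add: shift)
  moreover have "conj_prod G y g l \<in> carrier G" "conj_prod G z f l \<in> carrier G"
    using tail tail_c subset by (auto intro: conj_prod_closed)
  ultimately show ?case using c B by (simp add: B_def m_assoc)
qed

lemma conjprod_pow_mult_cl_near:
  fixes n k :: nat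
  assumes x: "\<forall>i\<in>{1..m}. x i \<in> H" and m: "1 \<le> m"
    and h: "\<forall>i\<in>{2..m}. h i \<in> carrier G" and f: "\<forall>i\<in>{2..m}. f i \<in> carrier G"
  shows "cl_near G H (m - 1)
    (conjprod G m (\<lambda>i. x i [^] n) h \<otimes> conjprod G m (\<lambda>i. x i [^] k) f)
    (conjprod G m (\<lambda>i. x i [^] (n + k)) f)"
proof -
  define l where "l = [2..<Suc m]"
  have l: "set l = {2..m}" "length l = m - 1" by (auto simp: l_def)
  have xl: "\<forall>i\<in>set l. x i \<in> H \<and> x i \<in> carrier G" using x l(1) subset by auto
  define a where "a = x 1"
  have a: "a \<in> carrier G" using x m subset by (auto simp: a_def)
  define b where "b = inv (a [^] k)"
  have b: "b \<in> carrier G" using a by (simp add: b_def)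
  define Fh where "Fh = conj_prod G (\<lambda>i. x i [^] n) h l"
  define Ff where "Ff = conj_prod G (\<lambda>i. x i [^] k) f l"
  have F: "Fh \<in> carrier G" "Ff \<in> carrier G"
    using xl h f l(1) by (auto simp: Fh_def Ff_def intro: conj_prod_closed)
  have shift: "b \<otimes> Fh \<otimes> inv b = conj_prod G (\<lambda>i. x i [^] n) (\<lambda>j. b \<otimes> h j) l"
    unfolding Fh_def by (rule conj_prod_conj) (use xl h l(1) b in auto)
  have "\<forall>i\<in>set l. x i [^] n \<in> H \<and> x i [^] k \<in> carrier G \<and> b \<otimes> h i \<in> carrier G \<and> f i \<in> carrier G"
    using xl h f b l(1) subgroup_nat_pow_closed by auto
  from conj_prod_mult_cl_near[OF this]
  have "cl_near G H (m - 1) (b \<otimes> Fh \<otimes> inv b \<otimes> Ff) (conj_prod G (\<lambda>i. x i [^] (n + k)) f l)"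
    using xl by (simp add: shift l(2) Ff_def nat_pow_mult cong: conj_prod_cong)
  from cl_near_mult[OF cl_near_refl this, of "a [^] (n + k)"]
  have "cl_near G H (m - 1) (a [^] (n + k) \<otimes> (b \<otimes> Fh \<otimes> inv b \<otimes> Ff)) (conjprod G m (\<lambda>i. x i [^] (n + k)) f)"
    using a by (simp add: conjprod_eq_conj_prod a_def l_def)
  moreover have "a [^] (n + k) \<otimes> (b \<otimes> Fh \<otimes> inv b \<otimes> Ff)
      = conjprod G m (\<lambda>i. x i [^] n) h \<otimes> conjprod G m (\<lambda>i. x i [^] k) f"
    using a F by (simp add: conjprod_eq_conj_prod Fh_def Ff_def a_def l_def b_def m_assoc
        flip: nat_pow_mult)
  ultimately show ?thesis by simp
qed

text \<open>
  Off \<open>[G,N]\<close> the length \<open>cl\<close> is the junk value \<open>Inf {} = 0\<close>, so the products must be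
  shown to lie in \<open>[G,N]\<close> before their lengths can be compared.
\<close>
lemma conjprod_pow_mixed_comm:
  assumes x: "\<forall>i\<in>{1..m}. x i \<in> H" and m: "1 \<le> m"
    and prod: "ordprod G m x \<in> mixed_comm G H"
    and h: "\<forall>i\<in>{2..m}. h i \<in> carrier G"
  shows "conjprod G m (\<lambda>i. x i [^] (n::nat)) h \<in> mixed_comm G H"
  using h
proof (induct n arbitrary: h)
  case 0
  then show ?case by (simp add: conjprod_one subgroup.one_closed[OF mixed_comm_subgroup])
next
  case (Suc n)
  have triv: "\<forall>i\<in>{2..m}. (\<lambda>_. \<one>) i \<in> carrier G" by simp
  have xc: "\<forall>i\<in>{1..m}. x i \<in> carrier G" using x subset by auto
  have near: "cl_near G H (m - 1)
      (conjprod G m (\<lambda>i. x i [^] (1::nat)) h \<otimes> conjprod G m (\<lambda>i. x i [^] (0::nat)) (\<lambda>_. \<one>))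
      (conjprod G m (\<lambda>i. x i [^] (1 + 0 :: nat)) (\<lambda>_. \<one>))"
    by (rule conjprod_pow_mult_cl_near[OF x m Suc.prems triv])
  have "conjprod G m (\<lambda>i. x i [^] (1 + 0 :: nat)) (\<lambda>_. \<one>) = conjprod G m x (\<lambda>_. \<one>)"
    by (rule conjprod_cong[OF m]) (use xc in simp)
  also have "\<dots> = ordprod G m x"
    by (rule conjprod_trivial_conjugators[OF m xc])
  finally have "conjprod G m (\<lambda>i. x i [^] (1::nat)) h \<otimes> conjprod G m (\<lambda>i. x i [^] (0::nat)) (\<lambda>_. \<one>)
      \<in> mixed_comm G H"
    using cl_near_mixed_comm_iff[OF near] prod by simp
  moreover have "conjprod G m (\<lambda>i. x i [^] (1::nat)) h \<in> carrier G"
    by (rule conjprod_closed[OF m _ Suc.prems]) (use xc in simp)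
  ultimately have "conjprod G m (\<lambda>i. x i [^] (1::nat)) h \<in> mixed_comm G H"
    by (simp add: conjprod_one)
  then have "conjprod G m (\<lambda>i. x i [^] n) h \<otimes> conjprod G m (\<lambda>i. x i [^] (1::nat)) h \<in> mixed_comm G H"
    using Suc subgroup.m_closed[OF mixed_comm_subgroup] by blast
  then show ?case
    using cl_near_mixed_comm_iff[OF conjprod_pow_mult_cl_near[OF x m Suc.prems Suc.prems, of n 1]]
    by simp
qed

lemma cl_sum_pow_add_le:
  fixes n k :: nat
  assumes x: "\<forall>i\<in>{1..m}. x i \<in> H" and m: "1 \<le> m"
    and prod: "ordprod G m x \<in> mixed_comm G H"
  shows "cl_sum G H m (\<lambda>i. x i [^] (n + k))
    \<le> cl_sum G H m (\<lambda>i. x i [^] n) + cl_sum G H m (\<lambda>i. x i [^] k) + (m - 1)"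
proof -
  obtain h where h: "\<forall>i\<in>{2..m}. h i \<in> carrier G"
    and cl_h: "cl_sum G H m (\<lambda>i. x i [^] n) = cl G H (conjprod G m (\<lambda>i. x i [^] n) h)"
    by (rule cl_sum_obtain)
  obtain f where f: "\<forall>i\<in>{2..m}. f i \<in> carrier G"
    and cl_f: "cl_sum G H m (\<lambda>i. x i [^] k) = cl G H (conjprod G m (\<lambda>i. x i [^] k) f)"
    by (rule cl_sum_obtain)
  let ?P = "conjprod G m (\<lambda>i. x i [^] n) h" and ?Q = "conjprod G m (\<lambda>i. x i [^] k) f"
  have P: "?P \<in> mixed_comm G H" by (rule conjprod_pow_mixed_comm[OF x m prod h])
  have Q: "?Q \<in> mixed_comm G H" by (rule conjprod_pow_mixed_comm[OF x m prod f])
  have "cl_sum G H m (\<lambda>i. x i [^] (n + k)) \<le> cl G H (conjprod G m (\<lambda>i. x i [^] (n + k)) f)"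
    by (rule cl_sum_le[OF f])
  also have "\<dots> \<le> (m - 1) + cl G H (?P \<otimes> ?Q)"
    using cl_le_cl_near[OF conjprod_pow_mult_cl_near[OF x m h f]]
      subgroup.m_closed[OF mixed_comm_subgroup P Q] by simp
  also have "\<dots> \<le> (m - 1) + (cl G H ?P + cl G H ?Q)"
    using cl_mult_le[OF subset P Q] by simp
  finally show ?thesis using cl_h cl_f by simp
qed

end

lemma subadditive_mult_add_le:
  fixes a :: "nat \<Rightarrow> real"
  assumes "\<And>n k. a (n + k) \<le> a n + a k"
  shows "a (q * p + i) \<le> real q * a p + a i"
proof (induct q)
  case (Suc q)
  have "a (Suc q * p + i) \<le> a p + a (q * p + i)"
    using assms[of p "q * p + i"] by (simp add: add.assoc)
  with Suc show ?case by (simp add: algebra_simps)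
qed simp

lemma subadditive_div_le:
  fixes a :: "nat \<Rightarrow> real"
  assumes subadd: "\<And>n k. a (n + k) \<le> a n + a k" and nonneg: "\<And>n. 0 \<le> a n"
    and "0 < p" and "0 < n"
  shows "a n / n \<le> a p / p + (\<Sum>i<p. a i) / n"
proof -
  have "a n \<le> real (n div p) * a p + a (n mod p)"
    using subadditive_mult_add_le[OF subadd, of "n div p" p "n mod p"] by simp
  also have "real (n div p) * a p \<le> real n * (a p / p)"
  proof -
    have "real (n div p) * real p \<le> real n"
      by (metis div_mult_mod_eq le_add1 of_nat_le_iff of_nat_mult)
    then have "real (n div p) * real p * (a p / p) \<le> real n * (a p / p)"
      using nonneg \<open>0 < p\<close> by (intro mult_right_mono) auto
    then show ?thesis using \<open>0 < p\<close> by simp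
  qed
  also have "a (n mod p) \<le> (\<Sum>i<p. a i)"
    by (rule member_le_sum) (use nonneg \<open>0 < p\<close> in auto)
  finally show ?thesis using \<open>0 < n\<close> by (simp add: field_simps)
qed

lemma subadditive_div_convergent:
  fixes a :: "nat \<Rightarrow> real"
  assumes subadd: "\<And>n k. a (n + k) \<le> a n + a k" and nonneg: "\<And>n. 0 \<le> a n"
  shows "convergent (\<lambda>n. a n / real n)"
proof -
  define L where "L = (INF n\<in>{0<..}. a n / real n)"
  have bdd: "bdd_below ((\<lambda>n. a n / real n) ` {0<..})"
    using nonneg by (intro bdd_belowI[of _ 0]) auto
  have "(\<lambda>n. a n / real n) \<longlonglongrightarrow> L"
  proof (rule LIMSEQ_I)
    fix r :: real assume "0 < r"
    then obtain p where p: "0 < p" "a p / p < L + r / 2"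
      using cINF_less_iff[OF _ bdd, of "L + r / 2"] by (auto simp: L_def)
    define M where "M = (\<Sum>i<p. a i)"
    have "0 \<le> M" using nonneg by (simp add: M_def sum_nonneg)
    obtain n0 :: nat where n0: "2 * M / r < n0" using reals_Archimedean2 by blast
    show "\<exists>no. \<forall>n\<ge>no. norm (a n / real n - L) < r"
    proof (intro exI allI impI)
      fix n assume n: "Suc n0 \<le> n"
      have "2 * M < r * n0" using n0 \<open>0 < r\<close> by (simp add: field_simps)
      also have "\<dots> \<le> r * n" using n \<open>0 < r\<close> by simp
      finally have "M / n < r / 2" using n by (simp add: field_simps)
      then have "a n / n < L + r"
        using subadditive_div_le[OF subadd nonneg \<open>0 < p\<close>, of n] p(2) n unfolding M_def by linarith
      moreover have "L \<le> a n / n"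
        unfolding L_def by (rule cINF_lower[OF bdd]) (use n in simp)
      ultimately show "norm (a n / real n - L) < r" by simp
    qed
  qed
  then show ?thesis by (rule convergentI)
qed

theorem lemma5p11:
  fixes G (structure) and N :: "'a set" and m :: nat and x :: "nat \<Rightarrow> 'a"
  assumes "group G" and "N \<lhd> G" and "m \<ge> 1"
    and "\<forall>i\<in>{1..m}. x i \<in> N"
    and "ordprod G m x \<in> mixed_comm G N"
  shows "(\<forall>n k :: nat. cl_sum G N m (\<lambda>i. x i [^] (n + k)) + (m - 1)
            \<le> (cl_sum G N m (\<lambda>i. x i [^] n) + (m - 1)) + (cl_sum G N m (\<lambda>i. x i [^] k) + (m - 1)))
         \<and> convergent (\<lambda>n. real (cl_sum G N m (\<lambda>i. x i [^] n)) / real n)"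
proof -
  interpret normal N G by fact
  have subadd: "cl_sum G N m (\<lambda>i. x i [^] (n + k)) + (m - 1)
      \<le> (cl_sum G N m (\<lambda>i. x i [^] n) + (m - 1)) + (cl_sum G N m (\<lambda>i. x i [^] k) + (m - 1))"
    for n k :: nat
    using cl_sum_pow_add_le[OF assms(4,3,5), of n k] by simp
  let ?a = "\<lambda>n. real (cl_sum G N m (\<lambda>i. x i [^] n) + (m - 1))"
  have "?a (n + k) \<le> ?a n + ?a k" for n k :: nat
    using subadd[of n k] by (simp only: of_nat_add [symmetric] of_nat_le_iff)
  then have "convergent (\<lambda>n. ?a n / real n)"
    by (rule subadditive_div_convergent) simp
  moreover have "(\<lambda>n. real (m - 1) / real n) \<longlonglongrightarrow> 0"
    by (rule lim_const_over_n)
  ultimately have "convergent (\<lambda>n. ?a n / real n - real (m - 1) / real n)"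
    by (intro convergent_diff) (auto intro: convergentI)
  then have "convergent (\<lambda>n. real (cl_sum G N m (\<lambda>i. x i [^] n)) / real n)"
    by (simp add: diff_divide_distrib [symmetric])
  with subadd show ?thesis by blast
qed

end
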